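(* Let $0<\alpha<1$, let $0<a<b$, and let $x:[a,b]\to\mathbb{R}$ be an absolutely continuous function. Then for $t\in(a,b)$, $$ {_a\mathcal{D}_t^\alpha} x(t)=\frac{1}{\Gamma(1-\alpha)}\left(\ln\frac{t}{a}\right)^{-\alpha}x(t) +B(\alpha)\left(\ln\frac{t}{a}\right)^{1-\alpha}t\dot{x}(t) -\sum_{p=2}^\infty \left[C(\alpha,p)\left(\ln\frac{t}{a}\right)^{1-\alpha-p}V_p(t) - \frac{\Gamma(p+\alpha - 1)}{\Gamma(\alpha)\Gamma(1-\alpha)(p-1)!}\left(\ln\frac{t}{a}\right)^{-\alpha}x(t)\right], $$ where $$ B(\alpha)=\frac{1}{\Gamma(2-\alpha)}\left(1+\sum_{p=1}^\infty\frac{\Gamma(p+\alpha-1)}{\Gamma(\alpha-1)p!}\right),\qquad C(\alpha,p)=\frac{\Gamma(p+\alpha-1)}{\Gamma(-\alpha)\Gamma(1+\alpha)(p-1)!}, $$ $$ V_p(t)=(1-p)\int_a^t \left(\ln\frac{\tau}{a}\right)^{p-2}\frac{x(\tau)}{\tau}\,d\tau,\qquad p=2,3,\ldots $$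
   Context: $\Gamma$ denotes Euler's gamma function. For $0<\alpha<1$ and $x:[a,b]\to\mathbb{R}$ with $0<a<b$, the left Hadamard fractional derivative of order $\alpha$ is $$ {_a\mathcal{D}_t^\alpha} x(t)=t\frac{d}{dt}\left[\frac{1}{\Gamma(1-\alpha)}\int_a^t \left(\ln\frac{t}{\tau}\right)^{-\alpha}\frac{x(\tau)}{\tau}\,d\tau\right],\quad t\in(a,b). $$ $\dot x$ denotes the first derivative of $x$. *)

theory Defs
  imports "HOL-Analysis.Analysis"
begin

definition abs_continuous_on_interval :: "real \<Rightarrow> real \<Rightarrow> (real \<Rightarrow> real) \<Rightarrow> bool" where
  "abs_continuous_on_interval a b x \<longleftrightarrow>
     (\<forall>\<epsilon>>0. \<exists>\<delta>>0. \<forall>(n::nat) (u::nat \<Rightarrow> real) (v::nat \<Rightarrow> real).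
        (\<forall>i<n. a \<le> u i \<and> u i \<le> v i \<and> v i \<le> b) \<and>
        (\<forall>i<n. \<forall>j<n. i \<noteq> j \<longrightarrow> v i \<le> u j \<or> v j \<le> u i) \<and>
        (\<Sum>i<n. v i - u i) < \<delta>
        \<longrightarrow> (\<Sum>i<n. \<bar>x (v i) - x (u i)\<bar>) < \<epsilon>)"

definition hadamard_left_deriv :: "real \<Rightarrow> real \<Rightarrow> (real \<Rightarrow> real) \<Rightarrow> real \<Rightarrow> real" where
  "hadamard_left_deriv \<alpha> a x t =
     t * deriv (\<lambda>s. (1 / Gamma (1 - \<alpha>)) *
                     integral {a..s} (\<lambda>\<tau>. (ln (s / \<tau>)) powr (- \<alpha>) * x \<tau> / \<tau>)) t"

definition hadB :: "real \<Rightarrow> real" where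
  "hadB \<alpha> = (1 / Gamma (2 - \<alpha>)) *
     (1 + (\<Sum>n. Gamma (real (n + 1) + \<alpha> - 1) / (Gamma (\<alpha> - 1) * fact (n + 1))))"

definition hadC :: "real \<Rightarrow> nat \<Rightarrow> real" where
  "hadC \<alpha> p = Gamma (real p + \<alpha> - 1) / (Gamma (- \<alpha>) * Gamma (1 + \<alpha>) * fact (p - 1))"

definition hadV :: "real \<Rightarrow> (real \<Rightarrow> real) \<Rightarrow> nat \<Rightarrow> real \<Rightarrow> real" where
  "hadV a x p t = (1 - real p) * integral {a..t} (\<lambda>\<tau>. (ln (\<tau> / a)) ^ (p - 2) * x \<tau> / \<tau>)"

end

theory Submission
  imports Defs "HOL-Real_Asymp.Real_Asymp"
begin

text \<open>Write \<open>x = x t + g\<close>; differentiability of \<open>x\<close> at \<open>t\<close> gives \<open>\<bar>g \<tau>\<bar> \<le> M \<bar>ln \<tau> - ln t\<bar>\<close>.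
  The Hadamard integral of the constant \<open>x t\<close> is explicit, and dominated convergence applied to
  the difference quotient in \<open>ln s\<close> shows that the Hadamard integral \<open>G\<close> of \<open>g\<close> has derivative
  \<open>- \<alpha> K / t\<close>, where \<open>K\<close> is the integral of \<open>ln (t / \<tau>) powr (- \<alpha> - 1) * g \<tau> / \<tau>\<close> over \<open>[a, t]\<close>.
  Hence \<open>\<Gamma>(1 - \<alpha>)\<close> times the Hadamard derivative equals \<open>L powr (- \<alpha>) * x t - \<alpha> K\<close>, with
  \<open>L = ln (t / a)\<close>. Writing \<open>ln (t / \<tau>) = L (1 - ln (\<tau> / a) / L)\<close> and expanding
  \<open>(1 - z) powr (- \<alpha> - 1)\<close> in its binomial series, whose coefficients are positive so that the
  partial sums are dominated by the full kernel, expresses \<open>K\<close> through the moments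
  \<open>\<integral> ln (\<tau> / a) ^ n * g \<tau> / \<tau>\<close>; these moments are exactly what the \<open>V\<^sub>p\<close> terms and the correction
  terms of the series encode. Finally \<open>B(\<alpha>) = 0\<close>: the partial sums of its series telescope to
  \<open>pochhammer \<alpha> N / N! - 1 \<longrightarrow> -1\<close>, so the term with the derivative of \<open>x\<close> vanishes.\<close>

lemma continuous_on_if_abs_continuous_on_interval:
  assumes "abs_continuous_on_interval a b x"
  shows "continuous_on {a..b} x"
  unfolding continuous_on_iff
proof (intro ballI allI impI)
  fix y e :: real assume y: "y \<in> {a..b}" and e: "0 < e"
  obtain d where d: "d > 0" and H: "\<forall>(n::nat) (u::nat \<Rightarrow> real) (v::nat \<Rightarrow> real).
        (\<forall>i<n. a \<le> u i \<and> u i \<le> v i \<and> v i \<le> b) \<and>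
        (\<forall>i<n. \<forall>j<n. i \<noteq> j \<longrightarrow> v i \<le> u j \<or> v j \<le> u i) \<and>
        (\<Sum>i<n. v i - u i) < d
        \<longrightarrow> (\<Sum>i<n. \<bar>x (v i) - x (u i)\<bar>) < e"
    using assms e unfolding abs_continuous_on_interval_def by blast
  show "\<exists>d>0. \<forall>z\<in>{a..b}. dist z y < d \<longrightarrow> dist (x z) (x y) < e"
  proof (intro exI[of _ d] conjI ballI impI)
    fix z assume z: "z \<in> {a..b}" "dist z y < d"
    have "(\<Sum>i<(1::nat). \<bar>x (max z y) - x (min z y)\<bar>) < e"
      using H[rule_format, of 1 "\<lambda>_. min z y" "\<lambda>_. max z y"] z y
      by (cases "z \<le> y") (auto simp: dist_real_def max_def min_def)
    then show "dist (x z) (x y) < e"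
      by (cases "z \<le> y") (auto simp: dist_real_def max_def min_def abs_minus_commute)
  qed (rule d)
qed

lemma absolutely_integrable_on_if_dominated:
  fixes f h :: "real \<Rightarrow> real"
  assumes "continuous_on {c..<s} f" "h integrable_on {c..s}"
    and "\<And>\<tau>. \<tau> \<in> {c..<s} \<Longrightarrow> \<bar>f \<tau>\<bar> \<le> h \<tau>"
  shows "f absolutely_integrable_on {c..s}"
proof -
  have f: "f \<in> borel_measurable (lebesgue_on {c..<s})"
    by (rule continuous_imp_measurable_on_sets_lebesgue[OF assms(1)]) auto
  have h: "h integrable_on {c..<s}"
    by (rule integrable_spike_set[OF assms(2)]) (auto intro: negligible_subset[of "{s}"])
  have "f absolutely_integrable_on {c..<s}"
    by (rule measurable_bounded_by_integrable_imp_absolutely_integrable[OF f _ h])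
       (use assms(3) in auto)
  then show ?thesis
    by (subst absolutely_integrable_spike_set_eq[where T="{c..<s}"])
       (auto intro: negligible_subset[of "{s}"])
qed

lemma has_integral_ln_quotient_powr:
  fixes \<beta> c s :: real
  assumes "0 < c" "c \<le> s" "\<beta> < 1"
  shows "((\<lambda>\<tau>. ln (s / \<tau>) powr (- \<beta>) / \<tau>) has_integral ln (s / c) powr (1 - \<beta>) / (1 - \<beta>)) {c..s}"
proof -
  define F where "F = (\<lambda>\<tau>::real. - (ln (s / \<tau>) powr (1 - \<beta>)) / (1 - \<beta>))"
  have "((\<lambda>\<tau>. ln (s / \<tau>) powr (- \<beta>) / \<tau>) has_integral F s - F c) {c..s}"
  proof (rule fundamental_theorem_of_calculus_interior[OF assms(2)])
    have "continuous_on {c..s} (\<lambda>\<tau>. ln (s / \<tau>) powr (1 - \<beta>))"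
      using assms by (intro continuous_on_powr') (auto intro!: continuous_intros)
    then show "continuous_on {c..s} F"
      unfolding F_def using assms by (intro continuous_on_minus continuous_on_divide continuous_on_const) auto
  next
    fix \<tau> assume \<tau>: "\<tau> \<in> {c<..<s}"
    then have pos: "0 < ln (s / \<tau>)" "0 < \<tau>" using assms by auto
    have "((\<lambda>\<tau>. ln (s / \<tau>)) has_real_derivative - 1 / \<tau>) (at \<tau>)"
      using pos assms by (auto intro!: derivative_eq_intros simp: field_simps)
    from DERIV_fun_powr[OF this pos(1), of "1 - \<beta>"]
    have "(F has_real_derivative - ((1 - \<beta>) * ln (s / \<tau>) powr (1 - \<beta> - 1) * (- 1 / \<tau>)) / (1 - \<beta>)) (at \<tau>)"
      unfolding F_def by (intro DERIV_cdivide DERIV_minus) simp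
    also have "- ((1 - \<beta>) * ln (s / \<tau>) powr (1 - \<beta> - 1) * (- 1 / \<tau>)) / (1 - \<beta>) = ln (s / \<tau>) powr (- \<beta>) / \<tau>"
      using assms pos by (simp add: field_simps)
    finally show "(F has_vector_derivative ln (s / \<tau>) powr (- \<beta>) / \<tau>) (at \<tau>)"
      by (simp add: has_real_derivative_iff_has_vector_derivative)
  qed
  then show ?thesis using assms by (simp add: F_def)
qed

lemma has_integral_ln_power_div:
  fixes a t :: real
  assumes "0 < a" "a \<le> t"
  shows "((\<lambda>\<tau>. ln (\<tau> / a) ^ n / \<tau>) has_integral ln (t / a) ^ (n + 1) / (n + 1)) {a..t}"
proof -
  define F where "F = (\<lambda>\<tau>. ln (\<tau> / a) ^ Suc n / real (Suc n))"
  have "((\<lambda>\<tau>. ln (\<tau> / a) ^ n / \<tau>) has_integral F t - F a) {a..t}"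
  proof (rule fundamental_theorem_of_calculus_interior[OF assms(2)])
    show "continuous_on {a..t} F"
      unfolding F_def using assms by (intro continuous_intros) auto
  next
    fix \<tau> assume "\<tau> \<in> {a<..<t}"
    then have "0 < \<tau>" using assms by auto
    then have "((\<lambda>\<tau>. ln (\<tau> / a)) has_real_derivative 1 / \<tau>) (at \<tau>)"
      using assms by (auto intro!: derivative_eq_intros simp: field_simps)
    from DERIV_chain2[OF DERIV_pow this, of "Suc n"]
    have "(F has_real_derivative real (Suc n) * ln (\<tau> / a) ^ n * (1 / \<tau>) / real (Suc n)) (at \<tau>)"
      unfolding F_def by (intro DERIV_cdivide) simp
    then show "(F has_vector_derivative ln (\<tau> / a) ^ n / \<tau>) (at \<tau>)"
      by (simp add: has_real_derivative_iff_has_vector_derivative)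
  qed
  then show ?thesis using assms by (simp add: F_def)
qed

lemma abs_diff_le_mult_abs_ln_diff:
  fixes u v b :: real
  assumes "0 < u" "0 < v" "u \<le> b" "v \<le> b"
  shows "\<bar>u - v\<bar> \<le> b * \<bar>ln u - ln v\<bar>"
proof -
  have *: "q - p \<le> b * (ln q - ln p)" if "0 < p" "p \<le> q" "q \<le> b" for p q :: real
  proof -
    have "ln (p / q) \<le> p / q - 1" using that by (intro ln_le_minus_one) auto
    then have "q - p \<le> q * (ln q - ln p)" using that by (simp add: ln_div field_simps)
    also have "\<dots> \<le> b * (ln q - ln p)" using that by (intro mult_right_mono) auto
    finally show ?thesis .
  qed
  show ?thesis
    using *[of u v] *[of v u] assms by (cases "u \<le> v") (auto simp: abs_if)
qed

lemma abs_powr_diff_le: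
  fixes p q \<alpha> :: real
  assumes "0 < p" "p \<le> q" "0 < \<alpha>"
  shows "\<bar>q powr (- \<alpha>) - p powr (- \<alpha>)\<bar> \<le> \<alpha> * (q - p) * p powr (- \<alpha> - 1)"
proof (cases "p = q")
  case False
  then have pq: "p < q" using assms by simp
  have "\<exists>z. p < z \<and> z < q \<and> q powr (- \<alpha>) - p powr (- \<alpha>) = (q - p) * (- \<alpha> * z powr (- \<alpha> - 1))"
  proof (rule MVT2[OF pq])
    fix z assume "p \<le> z" "z \<le> q"
    then show "((\<lambda>v. v powr (- \<alpha>)) has_real_derivative - \<alpha> * z powr (- \<alpha> - 1)) (at z)"
      using assms has_real_derivative_powr[of z "- \<alpha>"] by auto
  qed
  then obtain z where z: "p < z" "z < q"
    and mvt: "q powr (- \<alpha>) - p powr (- \<alpha>) = (q - p) * (- \<alpha> * z powr (- \<alpha> - 1))"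
    by blast
  have "z powr (- \<alpha> - 1) \<le> p powr (- \<alpha> - 1)"
    using z assms by (intro powr_mono2') auto
  then show ?thesis
    using z assms pq by (simp add: mvt abs_mult mult_left_mono)
qed simp

lemma abs_powr_difference_quotient_le:
  fixes v h \<alpha> :: real
  assumes "2 * \<bar>h\<bar> \<le> v" "h \<noteq> 0" "0 < \<alpha>"
  shows "\<bar>((v + h) powr (- \<alpha>) - v powr (- \<alpha>)) / h\<bar> \<le> \<alpha> * 2 powr (\<alpha> + 1) * v powr (- \<alpha> - 1)"
proof -
  define p where "p = min v (v + h)"
  have p: "0 < p" "v / 2 \<le> p" using assms unfolding p_def by auto
  have "\<bar>(v + h) powr (- \<alpha>) - v powr (- \<alpha>)\<bar> \<le> \<alpha> * \<bar>h\<bar> * p powr (- \<alpha> - 1)"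
  proof (cases "0 \<le> h")
    case True
    then have "p = v" using assms by (auto simp: p_def)
    have "\<bar>(v + h) powr (- \<alpha>) - v powr (- \<alpha>)\<bar> \<le> \<alpha> * ((v + h) - v) * v powr (- \<alpha> - 1)"
      by (rule abs_powr_diff_le) (use p \<open>p = v\<close> True assms in auto)
    then show ?thesis using True \<open>p = v\<close> by simp
  next
    case False
    then have "p = v + h" using assms by (auto simp: p_def)
    have "\<bar>v powr (- \<alpha>) - (v + h) powr (- \<alpha>)\<bar> \<le> \<alpha> * (v - (v + h)) * (v + h) powr (- \<alpha> - 1)"
      by (rule abs_powr_diff_le) (use p \<open>p = v + h\<close> False assms in auto)
    then show ?thesis using False \<open>p = v + h\<close> by (simp add: abs_minus_commute)
  qed
  also have "\<dots> \<le> \<alpha> * \<bar>h\<bar> * (v / 2) powr (- \<alpha> - 1)"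
    using p assms by (intro mult_left_mono powr_mono2') auto
  also have "(v / 2) powr (- \<alpha> - 1) = 2 powr (\<alpha> + 1) * v powr (- \<alpha> - 1)"
  proof -
    have "(v / 2) powr (- \<alpha> - 1) = v powr (- \<alpha> - 1) / 2 powr (- \<alpha> - 1)"
      using p by (simp add: powr_divide)
    also have "(2::real) powr (- \<alpha> - 1) = 2 powr (- (\<alpha> + 1))"
      by (rule arg_cong[where f = "\<lambda>e. (2::real) powr e"]) simp
    also have "\<dots> = inverse (2 powr (\<alpha> + 1))"
      by (rule powr_minus)
    finally show ?thesis
      by (simp only: divide_inverse inverse_inverse_eq mult.commute)
  qed
  finally have "\<bar>(v + h) powr (- \<alpha>) - v powr (- \<alpha>)\<bar> \<le> \<bar>h\<bar> * (\<alpha> * 2 powr (\<alpha> + 1) * v powr (- \<alpha> - 1))"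
    by (simp only: mult_ac)
  then show ?thesis
    using assms by (simp add: abs_divide pos_divide_le_eq mult.commute)
qed

lemma powr_difference_quotient_tendsto:
  fixes u c :: real
  assumes "0 < u"
  shows "((\<lambda>h. ((u + h) powr c - u powr c) / h) \<longlongrightarrow> c * u powr (c - 1)) (at 0)"
  using has_real_derivative_powr[OF assms, of c] by (simp add: DERIV_def)

lemma differentiable_imp_lipschitz_at:
  fixes x :: "real \<Rightarrow> real"
  assumes "x differentiable (at t)" "bounded (x ` S)"
  shows "\<exists>M\<ge>0. \<forall>\<tau>\<in>S. \<bar>x \<tau> - x t\<bar> \<le> M * \<bar>\<tau> - t\<bar>"
proof -
  obtain D where "(x has_real_derivative D) (at t)"
    using assms(1) DERIV_deriv_iff_real_differentiable by blast
  then have "((\<lambda>y. \<bar>(x y - x t) / (y - t)\<bar>) \<longlongrightarrow> \<bar>D\<bar>) (at t)"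
    by (intro tendsto_rabs) (simp add: has_field_derivative_iff)
  then have "eventually (\<lambda>y. \<bar>(x y - x t) / (y - t)\<bar> < \<bar>D\<bar> + 1) (at t)"
    by (rule order_tendstoD) simp
  then obtain d where d: "d > 0"
    and near: "\<And>y. y \<noteq> t \<Longrightarrow> dist y t < d \<Longrightarrow> \<bar>(x y - x t) / (y - t)\<bar> < \<bar>D\<bar> + 1"
    unfolding eventually_at by auto
  obtain B where B: "\<And>y. y \<in> S \<Longrightarrow> \<bar>x y\<bar> \<le> B"
    using assms(2) bounded_real by fastforce
  define M where "M = max (\<bar>D\<bar> + 1) ((B + \<bar>x t\<bar>) / d)"
  have "\<bar>x \<tau> - x t\<bar> \<le> M * \<bar>\<tau> - t\<bar>" if "\<tau> \<in> S" for \<tau>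
  proof (cases "\<tau> = t")
    case False
    show ?thesis
    proof (cases "dist \<tau> t < d")
      case True
      with near[OF False] False have "\<bar>x \<tau> - x t\<bar> / \<bar>\<tau> - t\<bar> < \<bar>D\<bar> + 1"
        by (simp add: abs_divide)
      then have "\<bar>x \<tau> - x t\<bar> \<le> (\<bar>D\<bar> + 1) * \<bar>\<tau> - t\<bar>"
        using False by (simp add: field_simps)
      also have "\<dots> \<le> M * \<bar>\<tau> - t\<bar>"
        unfolding M_def by (intro mult_right_mono) auto
      finally show ?thesis .
    next
      case far: False
      have "\<bar>x \<tau> - x t\<bar> \<le> ((B + \<bar>x t\<bar>) / d) * d"
        using B[OF that] d by simp
      also have "\<dots> \<le> ((B + \<bar>x t\<bar>) / d) * \<bar>\<tau> - t\<bar>"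
        using far d B[OF that] by (intro mult_left_mono) (auto simp: dist_real_def)
      also have "\<dots> \<le> M * \<bar>\<tau> - t\<bar>"
        unfolding M_def by (intro mult_right_mono) auto
      finally show ?thesis .
    qed
  qed simp
  moreover have "M \<ge> 0" unfolding M_def by auto
  ultimately show ?thesis by blast
qed

lemma differentiable_imp_ln_lipschitz_at:
  fixes x :: "real \<Rightarrow> real"
  assumes "x differentiable (at t)" "continuous_on {a..b} x" "0 < a" "t \<in> {a..b}"
  shows "\<exists>M. \<forall>\<tau>\<in>{a..b}. \<bar>x \<tau> - x t\<bar> \<le> M * \<bar>ln \<tau> - ln t\<bar>"
proof -
  have "bounded (x ` {a..b})"
    by (intro compact_imp_bounded compact_continuous_image assms(2)) auto
  then obtain M where M: "M \<ge> 0" "\<And>\<tau>. \<tau> \<in> {a..b} \<Longrightarrow> \<bar>x \<tau> - x t\<bar> \<le> M * \<bar>\<tau> - t\<bar>"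
    using differentiable_imp_lipschitz_at[OF assms(1)] by blast
  have "\<bar>x \<tau> - x t\<bar> \<le> M * b * \<bar>ln \<tau> - ln t\<bar>" if "\<tau> \<in> {a..b}" for \<tau>
  proof -
    have "\<bar>x \<tau> - x t\<bar> \<le> M * \<bar>\<tau> - t\<bar>" by (rule M(2)[OF that])
    also have "\<dots> \<le> M * (b * \<bar>ln \<tau> - ln t\<bar>)"
      using that assms M(1) by (intro mult_left_mono abs_diff_le_mult_abs_ln_diff) auto
    finally show ?thesis by (simp add: mult_ac)
  qed
  then show ?thesis by blast
qed

section \<open>Pochhammer and Gamma identities\<close>

lemma pochhammer_div_fact_tendsto_0:
  fixes \<alpha> :: real
  assumes "0 < \<alpha>" "\<alpha> < 1"
  shows "(\<lambda>N. pochhammer \<alpha> N / fact N) \<longlonglongrightarrow> 0"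
proof -
  have "(\<lambda>N. exp (\<alpha> * ln (real N)) / (\<alpha> + real N)) \<longlonglongrightarrow> 0"
    using assms by real_asymp
  with rGamma_series_LIMSEQ[of \<alpha>]
  have "(\<lambda>N. rGamma_series \<alpha> N * (exp (\<alpha> * ln (real N)) / (\<alpha> + real N))) \<longlonglongrightarrow> 0"
    using tendsto_mult by fastforce
  moreover have "rGamma_series \<alpha> N * (exp (\<alpha> * ln (real N)) / (\<alpha> + real N)) = pochhammer \<alpha> N / fact N" for N
  proof -
    have "(X * P) / (F * E) * (E / X) = P / F" if "X \<noteq> 0" "E \<noteq> 0" "F \<noteq> 0" for X P F E :: real
      using that by (simp add: field_simps)
    moreover have "\<alpha> + real N \<noteq> 0" using assms by simp
    ultimately show ?thesis
      by (simp add: rGamma_series_def pochhammer_rec')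
  qed
  ultimately show ?thesis by simp
qed

lemma sum_pochhammer_div_fact:
  fixes \<alpha> :: real
  shows "(\<Sum>n<N. pochhammer (\<alpha> - 1) (n + 1) / fact (n + 1)) = pochhammer \<alpha> N / fact N - 1"
proof (induction N)
  case (Suc N)
  have "pochhammer (\<alpha> - 1) (Suc N) = (\<alpha> - 1) * pochhammer \<alpha> N"
    by (simp add: pochhammer_rec)
  moreover have "pochhammer \<alpha> (Suc N) = (\<alpha> + real N) * pochhammer \<alpha> N"
    by (simp add: pochhammer_rec')
  moreover have "P / F - 1 + (\<alpha> - 1) * P / (X * F) = (\<alpha> + (X - 1)) * P / (X * F) - 1"
    if "F \<noteq> 0" "X \<noteq> 0" for P F X :: real
    using that by (simp add: field_simps)
  ultimately show ?case
    using Suc by (simp del: of_nat_Suc)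
qed simp

lemma not_nonpos_Int_between_integers:
  fixes x :: real
  assumes "of_int k < x" "x < of_int k + 1"
  shows "x \<notin> \<int>\<^sub>\<le>\<^sub>0"
proof
  assume "x \<in> \<int>\<^sub>\<le>\<^sub>0"
  then obtain n :: nat where "x = - of_nat n" by (elim nonpos_Ints_cases')
  with assms have "k < - int n" "- int n < k + 1" by linarith+
  then show False by linarith
qed

lemma hadB_eq_0:
  fixes \<alpha> :: real
  assumes "0 < \<alpha>" "\<alpha> < 1"
  shows "hadB \<alpha> = 0"
proof -
  have "\<alpha> - 1 \<notin> \<int>\<^sub>\<le>\<^sub>0"
    using assms by (intro not_nonpos_Int_between_integers[of "- 1"]) auto
  then have summand: "Gamma (real (n + 1) + \<alpha> - 1) / (Gamma (\<alpha> - 1) * fact (n + 1))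
      = pochhammer (\<alpha> - 1) (n + 1) / fact (n + 1)" for n
    by (simp add: pochhammer_Gamma add_ac)
  have "(\<lambda>N. \<Sum>n<N. pochhammer (\<alpha> - 1) (n + 1) / fact (n + 1)) \<longlonglongrightarrow> 0 - 1"
    unfolding sum_pochhammer_div_fact
    by (intro tendsto_diff pochhammer_div_fact_tendsto_0 assms tendsto_const)
  then have "(\<Sum>n. pochhammer (\<alpha> - 1) (n + 1) / fact (n + 1)) = - 1"
    by (simp add: sums_def sums_unique[symmetric])
  then show ?thesis
    unfolding hadB_def summand by simp
qed

lemma pochhammer_binomial_series:
  fixes \<beta> z :: real
  assumes "\<bar>z\<bar> < 1"
  shows "(\<lambda>n. pochhammer \<beta> n / fact n * z ^ n) sums (1 - z) powr (- \<beta>)"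
proof -
  have "(\<lambda>n. (- \<beta> gchoose n) * (- z) ^ n) sums (1 + - z) powr (- \<beta>)"
    by (rule gen_binomial_real) (use assms in simp)
  moreover have "(- \<beta> gchoose n) * (- z) ^ n = pochhammer \<beta> n / fact n * z ^ n" for n
  proof -
    have "((-1::real) ^ n) * (-1) ^ n = 1"
      by (simp flip: power_mult_distrib)
    then show ?thesis
      by (simp add: gbinomial_pochhammer power_minus[of z] field_simps)
  qed
  ultimately show ?thesis by simp
qed

lemma Gamma_coefficient_eq_pochhammer:
  fixes \<alpha> :: real
  assumes "0 < \<alpha>" "\<alpha> < 1"
  shows "Gamma (real (n + 2) + \<alpha> - 1) / (Gamma \<alpha> * Gamma (1 - \<alpha>) * fact (n + 2 - 1))
      = pochhammer \<alpha> (n + 1) / (Gamma (1 - \<alpha>) * fact (n + 1))"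
proof -
  have not_pole: "\<alpha> \<notin> \<int>\<^sub>\<le>\<^sub>0"
    using assms by (intro not_nonpos_Int_between_integers[of 0]) auto
  have "pochhammer \<alpha> (n + 1) = Gamma (\<alpha> + real (n + 1)) / Gamma \<alpha>"
    by (rule pochhammer_Gamma[OF not_pole])
  moreover have "Gamma \<alpha> \<noteq> 0"
    by (rule Gamma_nonzero[OF not_pole])
  ultimately have "Gamma (real (n + 2) + \<alpha> - 1) = Gamma \<alpha> * pochhammer \<alpha> (n + 1)"
    by (simp add: add_ac)
  moreover have "n + 2 - 1 = n + 1" by simp
  ultimately show ?thesis
    using nonzero_mult_divide_mult_cancel_left[OF \<open>Gamma \<alpha> \<noteq> 0\<close>] by (simp only: mult.assoc)
qed

lemma hadC_eq_pochhammer: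
  fixes \<alpha> :: real
  assumes "0 < \<alpha>" "\<alpha> < 1"
  shows "hadC \<alpha> (n + 2) = - (pochhammer \<alpha> (n + 1) / (Gamma (1 - \<alpha>) * fact (n + 1)))"
proof -
  have not_pole: "\<alpha> \<notin> \<int>\<^sub>\<le>\<^sub>0" "- \<alpha> \<notin> \<int>\<^sub>\<le>\<^sub>0"
    using assms not_nonpos_Int_between_integers[of 0 \<alpha>] not_nonpos_Int_between_integers[of "- 1" "- \<alpha>"]
    by simp_all
  have "Gamma (1 + \<alpha>) = \<alpha> * Gamma \<alpha>"
    using Gamma_plus1[OF not_pole(1)] by (simp add: add.commute)
  moreover have "Gamma (1 - \<alpha>) = - \<alpha> * Gamma (- \<alpha>)"
    using Gamma_plus1[OF not_pole(2)] by simp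
  ultimately have "Gamma (- \<alpha>) * Gamma (1 + \<alpha>) = - (Gamma \<alpha> * Gamma (1 - \<alpha>))"
    by (simp add: algebra_simps)
  then show ?thesis
    using Gamma_coefficient_eq_pochhammer[OF assms, of n] by (simp add: hadC_def)
qed

lemma pochhammer_Suc_coefficient:
  fixes \<alpha> :: real
  assumes "0 < \<alpha>" "\<alpha> < 1"
  shows "pochhammer \<alpha> (n + 1) / (Gamma (1 - \<alpha>) * fact (n + 1)) * (real n + 1)
    = \<alpha> / Gamma (1 - \<alpha>) * (pochhammer (\<alpha> + 1) n / fact n)"
proof -
  have cancel: "\<alpha> * Q / (G * (N * F)) * N = \<alpha> / G * (Q / F)"
    if "G \<noteq> 0" "F \<noteq> 0" "N \<noteq> 0" for Q G F N :: real
    using that by (simp add: field_simps)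
  have "Gamma (1 - \<alpha>) \<noteq> 0"
    using assms by (intro Gamma_nonzero) auto
  moreover have "pochhammer \<alpha> (n + 1) = \<alpha> * pochhammer (\<alpha> + 1) n"
    by (simp add: pochhammer_rec)
  moreover have "fact (n + 1) = (real n + 1) * (fact n :: real)"
    by simp
  ultimately show ?thesis
    by (simp only:) (rule cancel, auto)
qed

section \<open>The Hadamard integral of a function vanishing log-Lipschitz at \<open>t\<close>\<close>

locale hadamard_vanishing =
  fixes \<alpha> a b t M :: real and g :: "real \<Rightarrow> real"
  assumes order: "0 < \<alpha>" "\<alpha> < 1"
    and interval: "0 < a" "a < t" "t < b"
    and continuous: "continuous_on {a..b} g"
    and ln_lipschitz: "\<And>\<tau>. \<tau> \<in> {a..b} \<Longrightarrow> \<bar>g \<tau>\<bar> \<le> M * \<bar>ln \<tau> - ln t\<bar>"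
begin

definition "L = ln (t / a)"
definition "integrand r \<tau> = ln (r / \<tau>) powr (- \<alpha>) * g \<tau> / \<tau>"
definition "G r = integral {a..r} (integrand r)"
definition "K = integral {a..t} (\<lambda>\<tau>. ln (t / \<tau>) powr (- \<alpha> - 1) * g \<tau> / \<tau>)"

lemma L_pos: "L > 0"
  using interval by (simp add: L_def)

lemma M_nonneg: "M \<ge> 0"
proof -
  have "0 < \<bar>ln a - ln t\<bar>" using interval by simp
  moreover have "0 \<le> M * \<bar>ln a - ln t\<bar>"
    using ln_lipschitz[of a] interval by (meson abs_ge_zero atLeastAtMost_iff order.trans less_imp_le order_refl)
  ultimately show ?thesis by (simp add: zero_le_mult_iff)
qed

lemma g_at_t: "g t = 0"
  using ln_lipschitz[of t] interval by simp

lemma abs_g_le_ln: "\<tau> \<in> {a..t} \<Longrightarrow> \<bar>g \<tau>\<bar> \<le> M * ln (t / \<tau>)"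
  using ln_lipschitz[of \<tau>] interval by (simp add: ln_div)

lemma kernel_integrable: "a \<le> s \<Longrightarrow> (\<lambda>\<tau>. ln (s / \<tau>) powr (- \<alpha>) / \<tau>) integrable_on {a..s}"
  using has_integral_ln_quotient_powr[of a s \<alpha>] interval order by blast

lemma K_integrand_absolutely_integrable:
  "(\<lambda>\<tau>. ln (t / \<tau>) powr (- \<alpha> - 1) * g \<tau> / \<tau>) absolutely_integrable_on {a..t}"
proof (rule absolutely_integrable_on_if_dominated)
  show "continuous_on {a..<t} (\<lambda>\<tau>. ln (t / \<tau>) powr (- \<alpha> - 1) * g \<tau> / \<tau>)"
    using interval by (intro continuous_intros continuous_on_powr' continuous_on_subset[OF continuous]) auto
  show "(\<lambda>\<tau>. M * (ln (t / \<tau>) powr (- \<alpha>) / \<tau>)) integrable_on {a..t}"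
    using kernel_integrable[of t] interval by (intro integrable_on_mult_right) auto
next
  fix \<tau> assume \<tau>: "\<tau> \<in> {a..<t}"
  then have pos: "ln (t / \<tau>) > 0" "\<tau> > 0" using interval by auto
  have "\<bar>ln (t / \<tau>) powr (- \<alpha> - 1) * g \<tau> / \<tau>\<bar> = ln (t / \<tau>) powr (- \<alpha> - 1) * \<bar>g \<tau>\<bar> / \<tau>"
    using pos by (simp add: abs_mult)
  also have "\<dots> \<le> ln (t / \<tau>) powr (- \<alpha> - 1) * (M * ln (t / \<tau>)) / \<tau>"
    using abs_g_le_ln[of \<tau>] \<tau> pos by (intro divide_right_mono mult_left_mono) auto
  also have "\<dots> = M * (ln (t / \<tau>) powr (- \<alpha>) / \<tau>)"
    using pos by (simp add: powr_diff field_simps powr_minus)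
  finally show "\<bar>ln (t / \<tau>) powr (- \<alpha> - 1) * g \<tau> / \<tau>\<bar> \<le> M * (ln (t / \<tau>) powr (- \<alpha>) / \<tau>)" .
qed

lemma integrand_absolutely_integrable:
  assumes "a \<le> s" "s \<le> b"
  shows "integrand s absolutely_integrable_on {a..s}"
proof -
  obtain B where B: "\<And>\<tau>. \<tau> \<in> {a..b} \<Longrightarrow> \<bar>g \<tau>\<bar> \<le> B"
    using compact_imp_bounded[OF compact_continuous_image[OF continuous]] bounded_real by fastforce
  show ?thesis
  proof (rule absolutely_integrable_on_if_dominated)
    show "continuous_on {a..<s} (integrand s)"
      unfolding integrand_def using interval assms
      by (intro continuous_intros continuous_on_powr' continuous_on_subset[OF continuous]) auto
    show "(\<lambda>\<tau>. B * (ln (s / \<tau>) powr (- \<alpha>) / \<tau>)) integrable_on {a..s}"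
      using kernel_integrable[OF assms(1)] by (rule integrable_on_mult_right)
  next
    fix \<tau> assume \<tau>: "\<tau> \<in> {a..<s}"
    then have "\<tau> > 0" using interval by auto
    then have "\<bar>integrand s \<tau>\<bar> = ln (s / \<tau>) powr (- \<alpha>) * \<bar>g \<tau>\<bar> / \<tau>"
      by (simp add: integrand_def abs_mult)
    also have "\<dots> \<le> ln (s / \<tau>) powr (- \<alpha>) * B / \<tau>"
      using B[of \<tau>] \<tau> \<open>\<tau> > 0\<close> assms by (intro divide_right_mono mult_left_mono) auto
    finally show "\<bar>integrand s \<tau>\<bar> \<le> B * (ln (s / \<tau>) powr (- \<alpha>) / \<tau>)"
      by (simp add: mult_ac)
  qed
qed

lemma integrand_integrable: "a \<le> s \<Longrightarrow> s \<le> b \<Longrightarrow> integrand s integrable_on {a..s}"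
  using integrand_absolutely_integrable set_lebesgue_integral_eq_integral(1) by blast

lemma abs_integral_integrand_le:
  assumes "a \<le> c" "c \<le> s" "s \<le> b"
    and D: "\<And>\<tau>. \<tau> \<in> {c..s} \<Longrightarrow> \<bar>ln \<tau> - ln t\<bar> \<le> D"
  shows "\<bar>integral {c..s} (integrand s)\<bar> \<le> M * D * (ln (s / c) powr (1 - \<alpha>) / (1 - \<alpha>))"
proof -
  have bound: "((\<lambda>\<tau>. M * D * (ln (s / \<tau>) powr (- \<alpha>) / \<tau>)) has_integral
      M * D * (ln (s / c) powr (1 - \<alpha>) / (1 - \<alpha>))) {c..s}"
    using has_integral_ln_quotient_powr[of c s \<alpha>] assms interval order by (intro has_integral_mult_right) auto
  have "norm (integral {c..s} (integrand s)) \<le> integral {c..s} (\<lambda>\<tau>. M * D * (ln (s / \<tau>) powr (- \<alpha>) / \<tau>))"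
  proof (rule integral_norm_bound_integral)
    show "integrand s integrable_on {c..s}"
      by (rule integrable_on_subinterval[OF integrand_integrable]) (use assms in auto)
    show "(\<lambda>\<tau>. M * D * (ln (s / \<tau>) powr (- \<alpha>) / \<tau>)) integrable_on {c..s}"
      using bound by blast
  next
    fix \<tau> assume "\<tau> \<in> {c..s}"
    then have \<tau>: "\<tau> > 0" "\<tau> \<in> {a..b}" using interval assms by auto
    have "\<bar>g \<tau>\<bar> \<le> M * D"
      using ln_lipschitz[OF \<tau>(2)] D[OF \<open>\<tau> \<in> {c..s}\<close>] M_nonneg by (meson mult_left_mono order.trans)
    then have "ln (s / \<tau>) powr (- \<alpha>) * \<bar>g \<tau>\<bar> / \<tau> \<le> ln (s / \<tau>) powr (- \<alpha>) * (M * D) / \<tau>"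
      using \<tau> by (intro divide_right_mono mult_left_mono) auto
    then show "norm (integrand s \<tau>) \<le> M * D * (ln (s / \<tau>) powr (- \<alpha>) / \<tau>)"
      using \<tau> by (simp add: integrand_def abs_mult mult_ac)
  qed
  then show ?thesis
    using integral_unique[OF bound] by simp
qed

text \<open>The difference quotient of \<open>G\<close> in \<open>ln s\<close> is split at \<open>cutoff s\<close> (which stays above \<open>a\<close> for
  admissible \<open>s\<close>). Below the cutoff \<open>ln (t / \<tau>) \<ge> 2 \<bar>ln s - ln t\<bar>\<close>, so the difference quotient
  of the kernel is dominated uniformly in \<open>s\<close>; the two integrals above the cutoff are
  \<open>O(\<bar>ln s - ln t\<bar> powr (2 - \<alpha>))\<close>.\<close>

definition "cutoff s = t * exp (- 2 * \<bar>ln s - ln t\<bar>)"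
definition "admissible s \<longleftrightarrow> a < s \<and> s < b \<and> s \<noteq> t \<and> 2 * \<bar>ln s - ln t\<bar> \<le> L"
definition "quotient_integrand s \<tau> =
  (if \<tau> \<in> {..cutoff s} then (integrand s \<tau> - integrand t \<tau>) / (ln s - ln t) else 0)"

lemma eventually_admissible: "eventually admissible (at t)"
proof -
  have "((\<lambda>s. \<bar>ln s - ln t\<bar>) \<longlongrightarrow> \<bar>ln t - ln t\<bar>) (at t)"
    using interval by (intro tendsto_intros) auto
  then have "eventually (\<lambda>s. \<bar>ln s - ln t\<bar> < L / 2) (at t)"
    using L_pos by (intro order_tendstoD) auto
  moreover have "eventually (\<lambda>s. a < s) (at t)" "eventually (\<lambda>s. s < b) (at t)"
    using interval by (auto intro: order_tendstoD tendsto_ident_at)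
  moreover have "eventually (\<lambda>s. s \<noteq> t) (at t)"
    by (simp add: eventually_at_filter)
  ultimately show ?thesis
    unfolding admissible_def by eventually_elim auto
qed

lemma admissible_cutoff:
  assumes "admissible s"
  shows "a \<le> cutoff s" "cutoff s < t" "cutoff s < s" "0 < cutoff s" "0 < s" "ln s \<noteq> ln t"
    and "ln (cutoff s) = ln t - 2 * \<bar>ln s - ln t\<bar>"
proof -
  have s: "a < s" "s \<noteq> t" "2 * \<bar>ln s - ln t\<bar> \<le> L" using assms by (auto simp: admissible_def)
  show "0 < s" "0 < cutoff s" using s interval by (auto simp: cutoff_def)
  show ne: "ln s \<noteq> ln t" using s interval by simp
  show ln_cutoff: "ln (cutoff s) = ln t - 2 * \<bar>ln s - ln t\<bar>"
    using interval by (simp add: cutoff_def ln_mult)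
  have "ln a \<le> ln (cutoff s)" "ln (cutoff s) < ln t" "ln (cutoff s) < ln s"
    using ln_cutoff s ne interval by (auto simp: L_def ln_div abs_if)
  then show "a \<le> cutoff s" "cutoff s < t" "cutoff s < s"
    using \<open>0 < s\<close> \<open>0 < cutoff s\<close> interval by simp_all
qed

lemma quotient_integrand_eq:
  assumes "admissible s" "\<tau> \<in> {a..cutoff s}"
  shows "quotient_integrand s \<tau>
    = ((ln (t / \<tau>) + (ln s - ln t)) powr (- \<alpha>) - ln (t / \<tau>) powr (- \<alpha>)) / (ln s - ln t) * (g \<tau> / \<tau>)"
proof -
  define v where "v = ln (t / \<tau>)"
  define h where "h = ln s - ln t"
  have \<tau>: "0 < \<tau>" "\<tau> \<in> {..cutoff s}" using assms interval by auto
  have "h \<noteq> 0" using admissible_cutoff(6)[OF assms(1)] by (simp add: h_def)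
  have "ln (s / \<tau>) = v + h"
    using \<tau> admissible_cutoff(5)[OF assms(1)] interval by (simp add: v_def h_def ln_div)
  then have "quotient_integrand s \<tau> = ((v + h) powr (- \<alpha>) - v powr (- \<alpha>)) / h * (g \<tau> / \<tau>)"
    using \<tau>(2) unfolding quotient_integrand_def integrand_def v_def[symmetric] h_def[symmetric]
    using \<tau>(1) \<open>h \<noteq> 0\<close> by (simp add: field_simps)
  then show ?thesis by (simp only: v_def h_def)
qed

lemma abs_quotient_integrand_le:
  assumes "admissible s" "\<tau> \<in> {a..t}"
  shows "\<bar>quotient_integrand s \<tau>\<bar> \<le> \<alpha> * 2 powr (\<alpha> + 1) * M * (ln (t / \<tau>) powr (- \<alpha>) / \<tau>)"
proof (cases "\<tau> \<le> cutoff s")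
  case False
  then show ?thesis
    using assms(2) interval order M_nonneg by (simp add: quotient_integrand_def)
next
  case True
  note s = admissible_cutoff[OF assms(1)]
  define v where "v = ln (t / \<tau>)"
  define h where "h = ln s - ln t"
  have \<tau>: "0 < \<tau>" using assms(2) interval by auto
  have "ln \<tau> \<le> ln (cutoff s)" using True \<tau> s(4) by simp
  moreover have "v = ln t - ln \<tau>" using \<tau> interval by (simp add: v_def ln_div)
  moreover have "0 < \<bar>h\<bar>" using s(6) by (simp add: h_def)
  moreover have "ln (cutoff s) = ln t - 2 * \<bar>h\<bar>" using s(7) by (simp add: h_def)
  ultimately have v: "2 * \<bar>h\<bar> \<le> v" "0 < v" "h \<noteq> 0"
    by linarith+
  have "\<bar>quotient_integrand s \<tau>\<bar> = \<bar>((v + h) powr (- \<alpha>) - v powr (- \<alpha>)) / h\<bar> * (\<bar>g \<tau>\<bar> / \<tau>)"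
    using quotient_integrand_eq[OF assms(1)] True assms(2) \<tau> by (simp add: abs_mult v_def h_def)
  also have "\<dots> \<le> (\<alpha> * 2 powr (\<alpha> + 1) * v powr (- \<alpha> - 1)) * (M * v / \<tau>)"
  proof (rule mult_mono)
    show "0 \<le> \<alpha> * 2 powr (\<alpha> + 1) * v powr (- \<alpha> - 1)"
      using order(1) by (intro mult_nonneg_nonneg) auto
    show "\<bar>g \<tau>\<bar> / \<tau> \<le> M * v / \<tau>"
      using abs_g_le_ln[OF assms(2)] \<tau> by (simp add: v_def divide_right_mono)
    show "\<bar>((v + h) powr (- \<alpha>) - v powr (- \<alpha>)) / h\<bar> \<le> \<alpha> * 2 powr (\<alpha> + 1) * v powr (- \<alpha> - 1)"
      by (rule abs_powr_difference_quotient_le[OF v(1,3) order(1)])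
  qed (use \<tau> in simp)
  also have "\<dots> = \<alpha> * 2 powr (\<alpha> + 1) * M * ((v powr (- \<alpha> - 1) * v) / \<tau>)"
    by simp
  also have "v powr (- \<alpha> - 1) * v = v powr (- \<alpha>)"
    using v by (simp add: powr_diff)
  finally show ?thesis by (simp add: v_def)
qed

lemma quotient_integrand_integrable:
  assumes "admissible s"
  shows "quotient_integrand s integrable_on {a..t}"
proof -
  note s = admissible_cutoff[OF assms]
  have "\<forall>\<tau>\<in>{a..cutoff s}. 0 < \<tau> \<and> 0 < ln (s / \<tau>) \<and> 0 < ln (t / \<tau>)"
    using s interval by auto
  then have "continuous_on {a..cutoff s} (\<lambda>\<tau>. (integrand s \<tau> - integrand t \<tau>) / (ln s - ln t))"
    unfolding integrand_def using s interval
    by (intro continuous_intros continuous_on_powr' continuous_on_subset[OF continuous]) auto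
  moreover have "{..cutoff s} \<inter> {a..t} = {a..cutoff s}" using s by auto
  ultimately show ?thesis
    unfolding quotient_integrand_def integrable_restrict_Int
    by (metis integrable_continuous_interval)
qed

lemma quotient_integrand_tendsto:
  assumes Y: "\<And>k. admissible (Y k)" "Y \<longlonglongrightarrow> t" and \<tau>_in: "\<tau> \<in> {a..t}"
  shows "(\<lambda>k. quotient_integrand (Y k) \<tau>) \<longlonglongrightarrow> - \<alpha> * (ln (t / \<tau>) powr (- \<alpha> - 1) * g \<tau> / \<tau>)"
proof (cases "\<tau> = t")
  case True
  have "quotient_integrand (Y k) \<tau> = 0" for k
    using admissible_cutoff(2)[OF Y(1)[of k]] True by (simp add: quotient_integrand_def)
  then show ?thesis
    using True g_at_t by simp
next
  case False
  then have \<tau>: "\<tau> < t" "0 < \<tau>" using \<tau>_in interval by auto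
  define h where "h k = ln (Y k) - ln t" for k
  have ln_Y: "(\<lambda>k. ln (Y k)) \<longlonglongrightarrow> ln t"
    using Y(2) interval by (intro tendsto_ln) auto
  then have "(\<lambda>k. cutoff (Y k)) \<longlonglongrightarrow> t * exp (- 2 * \<bar>ln t - ln t\<bar>)"
    unfolding cutoff_def by (intro tendsto_intros ln_Y)
  then have "eventually (\<lambda>k. \<tau> \<le> cutoff (Y k)) sequentially"
    using \<tau> by (intro eventually_mono[OF order_tendstoD(1)]) auto
  then have eventually_eq: "eventually (\<lambda>k. ((ln (t / \<tau>) + h k) powr (- \<alpha>) - ln (t / \<tau>) powr (- \<alpha>)) / h k * (g \<tau> / \<tau>)
      = quotient_integrand (Y k) \<tau>) sequentially"
    by eventually_elim (use quotient_integrand_eq[OF Y(1)] \<tau>_in in \<open>simp add: h_def\<close>)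
  have "filterlim h (at 0) sequentially"
    unfolding h_def using admissible_cutoff(6)[OF Y(1)]
    by (intro filterlim_atI) (use ln_Y LIM_zero in auto)
  then have "(\<lambda>k. ((ln (t / \<tau>) + h k) powr (- \<alpha>) - ln (t / \<tau>) powr (- \<alpha>)) / h k)
      \<longlonglongrightarrow> - \<alpha> * ln (t / \<tau>) powr (- \<alpha> - 1)"
    using powr_difference_quotient_tendsto[of "ln (t / \<tau>)" "- \<alpha>"] \<tau> by (auto intro: filterlim_compose)
  then have "(\<lambda>k. ((ln (t / \<tau>) + h k) powr (- \<alpha>) - ln (t / \<tau>) powr (- \<alpha>)) / h k * (g \<tau> / \<tau>))
      \<longlonglongrightarrow> - \<alpha> * ln (t / \<tau>) powr (- \<alpha> - 1) * (g \<tau> / \<tau>)"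
    by (rule tendsto_mult_right)
  also have "- \<alpha> * ln (t / \<tau>) powr (- \<alpha> - 1) * (g \<tau> / \<tau>) = - \<alpha> * (ln (t / \<tau>) powr (- \<alpha> - 1) * g \<tau> / \<tau>)"
    by (simp only: times_divide_eq_right mult.assoc)
  finally show ?thesis
    using eventually_eq by (rule Lim_transform_eventually)
qed


lemma integral_quotient_integrand_tendsto:
  "((\<lambda>s. integral {a..t} (quotient_integrand s)) \<longlongrightarrow> - \<alpha> * K) (at t)"
  unfolding tendsto_at_iff_sequentially
proof (intro allI impI)
  fix X :: "nat \<Rightarrow> real"
  assume X: "\<forall>i. X i \<in> UNIV - {t}" "X \<longlonglongrightarrow> t"
  have "filterlim X (at t) sequentially"
    by (rule filterlim_atI[OF X(2)]) (use X(1) in auto)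
  from eventually_compose_filterlim[OF eventually_admissible this]
  obtain N where N: "\<And>n. n \<ge> N \<Longrightarrow> admissible (X n)"
    unfolding eventually_sequentially by blast
  define Y where "Y = (\<lambda>n. X (n + N))"
  have Y: "admissible (Y k)" for k using N by (simp add: Y_def)
  have "Y \<longlonglongrightarrow> t" unfolding Y_def by (rule LIMSEQ_ignore_initial_segment[OF X(2)])
  moreover have "(\<lambda>\<tau>. \<alpha> * 2 powr (\<alpha> + 1) * M * (ln (t / \<tau>) powr (- \<alpha>) / \<tau>)) integrable_on {a..t}"
    using kernel_integrable[of t] interval by (intro integrable_on_mult_right) auto
  ultimately have "(\<lambda>k. integral {a..t} (quotient_integrand (Y k)))
      \<longlonglongrightarrow> integral {a..t} (\<lambda>\<tau>. - \<alpha> * (ln (t / \<tau>) powr (- \<alpha> - 1) * g \<tau> / \<tau>))"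
    by (intro dominated_convergence(2)[OF quotient_integrand_integrable[OF Y]])
       (use abs_quotient_integrand_le[OF Y] quotient_integrand_tendsto[OF Y] in auto)
  then have "(\<lambda>k. integral {a..t} (quotient_integrand (Y k))) \<longlonglongrightarrow> - \<alpha> * K"
    unfolding K_def by (simp only: integral_mult_right)
  then have "(\<lambda>n. integral {a..t} (quotient_integrand (X n))) \<longlonglongrightarrow> - \<alpha> * K"
    unfolding Y_def by (rule LIMSEQ_offset)
  then show "((\<lambda>s. integral {a..t} (quotient_integrand s)) \<circ> X) \<longlonglongrightarrow> - \<alpha> * K"
    by (simp add: o_def)
qed

lemma difference_quotient_split:
  assumes "admissible s"
  shows "(G s - G t) / (ln s - ln t) = integral {a..t} (quotient_integrand s)
    + (integral {cutoff s..s} (integrand s) - integral {cutoff s..t} (integrand t)) / (ln s - ln t)"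
proof -
  note c = admissible_cutoff[OF assms]
  have s: "a < s" "s < b" using assms by (auto simp: admissible_def)
  have int_s: "integrand s integrable_on {a..s}" and int_t: "integrand t integrable_on {a..t}"
    using s interval by (auto intro: integrand_integrable)
  have "G s = integral {a..cutoff s} (integrand s) + integral {cutoff s..s} (integrand s)"
    unfolding G_def using Henstock_Kurzweil_Integration.integral_combine[OF c(1) less_imp_le[OF c(3)] int_s] by simp
  moreover have "G t = integral {a..cutoff s} (integrand t) + integral {cutoff s..t} (integrand t)"
    unfolding G_def using Henstock_Kurzweil_Integration.integral_combine[OF c(1) less_imp_le[OF c(2)] int_t] by simp
  moreover have "integral {a..t} (quotient_integrand s)
      = (integral {a..cutoff s} (integrand s) - integral {a..cutoff s} (integrand t)) / (ln s - ln t)"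
  proof -
    have dom: "{..cutoff s} \<inter> {a..t} = {a..cutoff s}" using c by auto
    have "integrand s integrable_on {a..cutoff s}" "integrand t integrable_on {a..cutoff s}"
      using c by (auto intro: integrable_on_subinterval[OF int_s] integrable_on_subinterval[OF int_t])
    then have "((\<lambda>\<tau>. (integrand s \<tau> - integrand t \<tau>) / (ln s - ln t)) has_integral
        (integral {a..cutoff s} (integrand s) - integral {a..cutoff s} (integrand t)) / (ln s - ln t)) {a..cutoff s}"
      by (intro has_integral_divide has_integral_diff integrable_integral)
    then show ?thesis
      unfolding quotient_integrand_def integral_restrict_Int dom by (rule integral_unique)
  qed
  ultimately show ?thesis
    by (simp add: diff_divide_distrib add_divide_distrib)
qed

lemma abs_tail_difference_le:
  assumes "admissible s"
  shows "\<bar>integral {cutoff s..s} (integrand s) - integral {cutoff s..t} (integrand t)\<bar>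
    \<le> \<bar>ln s - ln t\<bar> * (4 * M * ((3 * \<bar>ln s - ln t\<bar>) powr (1 - \<alpha>) / (1 - \<alpha>)))"
proof -
  note c = admissible_cutoff[OF assms]
  define h where "h = ln s - ln t"
  define P where "P = (3 * \<bar>h\<bar>) powr (1 - \<alpha>) / (1 - \<alpha>)"
  have near: "\<bar>ln \<tau> - ln t\<bar> \<le> 2 * \<bar>h\<bar>" if "cutoff s \<le> \<tau>" "\<tau> \<le> max s t" for \<tau>
  proof -
    have "0 < \<tau>" using that(1) c(4) by linarith
    then have "ln (cutoff s) \<le> ln \<tau>" "ln \<tau> \<le> ln s \<or> ln \<tau> \<le> ln t"
      using that c(4,5) interval by (auto simp: max_def split: if_splits)
    then show ?thesis using c(7) unfolding h_def by (smt (verit))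
  qed
  have "\<bar>integral {cutoff s..s} (integrand s)\<bar> \<le> M * (2 * \<bar>h\<bar>) * (ln (s / cutoff s) powr (1 - \<alpha>) / (1 - \<alpha>))"
    using c assms near by (intro abs_integral_integrand_le) (auto simp: admissible_def)
  also have "ln (s / cutoff s) = h + 2 * \<bar>h\<bar>" using c by (simp add: ln_div h_def)
  also have "M * (2 * \<bar>h\<bar>) * ((h + 2 * \<bar>h\<bar>) powr (1 - \<alpha>) / (1 - \<alpha>)) \<le> M * (2 * \<bar>h\<bar>) * P"
    unfolding P_def using order M_nonneg by (intro mult_left_mono divide_right_mono powr_mono2) (auto simp: abs_if)
  finally have s_part: "\<bar>integral {cutoff s..s} (integrand s)\<bar> \<le> M * (2 * \<bar>h\<bar>) * P" .
  have "\<bar>integral {cutoff s..t} (integrand t)\<bar> \<le> M * (2 * \<bar>h\<bar>) * (ln (t / cutoff s) powr (1 - \<alpha>) / (1 - \<alpha>))"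
  proof (rule abs_integral_integrand_le)
    fix \<tau> assume "\<tau> \<in> {cutoff s..t}"
    then show "\<bar>ln \<tau> - ln t\<bar> \<le> 2 * \<bar>h\<bar>" by (intro near) auto
  qed (use c interval in auto)
  also have "ln (t / cutoff s) = 2 * \<bar>h\<bar>" using c interval by (simp add: ln_div h_def)
  also have "M * (2 * \<bar>h\<bar>) * ((2 * \<bar>h\<bar>) powr (1 - \<alpha>) / (1 - \<alpha>)) \<le> M * (2 * \<bar>h\<bar>) * P"
    unfolding P_def using order M_nonneg by (intro mult_left_mono divide_right_mono powr_mono2) auto
  finally have t_part: "\<bar>integral {cutoff s..t} (integrand t)\<bar> \<le> M * (2 * \<bar>h\<bar>) * P" .
  from s_part t_part show ?thesis
    unfolding h_def[symmetric] P_def[symmetric] by (simp add: algebra_simps)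
qed

lemma tail_quotient_tendsto_0:
  "((\<lambda>s. (integral {cutoff s..s} (integrand s) - integral {cutoff s..t} (integrand t)) / (ln s - ln t))
    \<longlongrightarrow> 0) (at t)"
proof (rule Lim_null_comparison)
  show "eventually (\<lambda>s. norm ((integral {cutoff s..s} (integrand s) - integral {cutoff s..t} (integrand t))
      / (ln s - ln t)) \<le> 4 * M * ((3 * \<bar>ln s - ln t\<bar>) powr (1 - \<alpha>) / (1 - \<alpha>))) (at t)"
    using eventually_admissible
  proof eventually_elim
    case (elim s)
    then show ?case
      using abs_tail_difference_le[OF elim] admissible_cutoff(6)[OF elim]
      by (simp add: abs_divide divide_le_eq mult.commute)
  qed
  have "((\<lambda>s. 3 * \<bar>ln s - ln t\<bar>) \<longlongrightarrow> 3 * \<bar>ln t - ln t\<bar>) (at t)"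
    using interval by (intro tendsto_intros) auto
  then have "((\<lambda>s. (3 * \<bar>ln s - ln t\<bar>) powr (1 - \<alpha>)) \<longlongrightarrow> 0) (at t)"
    using order by (intro tendsto_zero_powrI[where b = "1 - \<alpha>"] tendsto_const) auto
  then show "((\<lambda>s. 4 * M * ((3 * \<bar>ln s - ln t\<bar>) powr (1 - \<alpha>) / (1 - \<alpha>))) \<longlongrightarrow> 0) (at t)"
    by (auto intro: tendsto_mult_right_zero tendsto_divide_zero)
qed

lemma G_has_derivative: "(G has_real_derivative - \<alpha> * K / t) (at t)"
proof -
  have "((\<lambda>s. integral {a..t} (quotient_integrand s)
      + (integral {cutoff s..s} (integrand s) - integral {cutoff s..t} (integrand t)) / (ln s - ln t))
      \<longlongrightarrow> - \<alpha> * K + 0) (at t)"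
    by (intro tendsto_add integral_quotient_integrand_tendsto tail_quotient_tendsto_0)
  moreover have "eventually (\<lambda>s. integral {a..t} (quotient_integrand s)
      + (integral {cutoff s..s} (integrand s) - integral {cutoff s..t} (integrand t)) / (ln s - ln t)
      = (G s - G t) / (ln s - ln t)) (at t)"
    using eventually_admissible by eventually_elim (simp add: difference_quotient_split)
  ultimately have "((\<lambda>s. (G s - G t) / (ln s - ln t)) \<longlongrightarrow> - \<alpha> * K) (at t)"
    using Lim_transform_eventually by fastforce
  moreover have "((\<lambda>s. (ln s - ln t) / (s - t)) \<longlongrightarrow> 1 / t) (at t)"
    using DERIV_ln_divide[of t] interval by (simp add: has_field_derivative_iff)
  ultimately have "((\<lambda>s. (G s - G t) / (ln s - ln t) * ((ln s - ln t) / (s - t))) \<longlongrightarrow> - \<alpha> * K * (1 / t)) (at t)"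
    by (rule tendsto_mult)
  moreover have "eventually (\<lambda>s. (G s - G t) / (ln s - ln t) * ((ln s - ln t) / (s - t))
      = (G s - G t) / (s - t)) (at t)"
    using eventually_admissible by eventually_elim (use admissible_cutoff(6) in simp)
  ultimately have "((\<lambda>s. (G s - G t) / (s - t)) \<longlongrightarrow> - \<alpha> * K / t) (at t)"
    using Lim_transform_eventually by fastforce
  then show ?thesis by (simp add: has_field_derivative_iff)
qed


section \<open>Termwise integration of the binomial expansion of the kernel\<close>

definition "moment n = integral {a..t} (\<lambda>\<tau>. ln (\<tau> / a) ^ n * g \<tau> / \<tau>)"

lemma moment_integrand_integrable: "(\<lambda>\<tau>. ln (\<tau> / a) ^ n * g \<tau> / \<tau>) integrable_on {a..t}"
  using interval
  by (intro integrable_continuous_interval continuous_intros continuous_on_subset[OF continuous]) auto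

lemma has_integral_moment_term:
  "((\<lambda>\<tau>. c * (ln (\<tau> / a) / L) ^ n * (g \<tau> / \<tau>)) has_integral c * (moment n / L ^ n)) {a..t}"
proof -
  have "((\<lambda>\<tau>. c / L ^ n * (ln (\<tau> / a) ^ n * g \<tau> / \<tau>)) has_integral c / L ^ n * moment n) {a..t}"
    unfolding moment_def by (intro has_integral_mult_right integrable_integral moment_integrand_integrable)
  then show ?thesis by (simp add: power_divide mult.assoc)
qed

lemma binomial_kernel_expansion:
  assumes "\<tau> \<in> {a..<t}"
  shows "(\<lambda>n. pochhammer (\<alpha> + 1) n / fact n * (ln (\<tau> / a) / L) ^ n)
    sums (L powr (\<alpha> + 1) * ln (t / \<tau>) powr (- \<alpha> - 1))"
proof -
  have \<tau>: "0 < \<tau>" "a \<le> \<tau>" "\<tau> < t" using assms interval by auto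
  have "0 \<le> ln (\<tau> / a)" "ln (\<tau> / a) < L"
    using \<tau> interval by (simp_all add: L_def divide_strict_right_mono)
  then have "\<bar>ln (\<tau> / a) / L\<bar> < 1" using L_pos by simp
  moreover have "1 - ln (\<tau> / a) / L = ln (t / \<tau>) / L"
    using L_pos \<tau> interval by (simp add: L_def field_simps ln_div)
  moreover have "(ln (t / \<tau>) / L) powr (- (\<alpha> + 1)) = L powr (\<alpha> + 1) * ln (t / \<tau>) powr (- \<alpha> - 1)"
  proof -
    have "(ln (t / \<tau>) / L) powr (- (\<alpha> + 1)) = ln (t / \<tau>) powr (- (\<alpha> + 1)) / L powr (- (\<alpha> + 1))"
      by (rule powr_divide)
    also have "L powr (- (\<alpha> + 1)) = inverse (L powr (\<alpha> + 1))"
      by (rule powr_minus)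
    finally show ?thesis
      by (simp only: divide_inverse inverse_inverse_eq mult.commute minus_add_distrib diff_conv_add_uminus)
  qed
  ultimately show ?thesis
    using pochhammer_binomial_series[of "ln (\<tau> / a) / L" "\<alpha> + 1"] by simp
qed

lemma binomial_partial_sum_bounds:
  assumes "\<tau> \<in> {a..<t}"
  shows "0 \<le> (\<Sum>n<N. pochhammer (\<alpha> + 1) n / fact n * (ln (\<tau> / a) / L) ^ n)"
    and "(\<Sum>n<N. pochhammer (\<alpha> + 1) n / fact n * (ln (\<tau> / a) / L) ^ n)
      \<le> L powr (\<alpha> + 1) * ln (t / \<tau>) powr (- \<alpha> - 1)"
proof -
  note series = binomial_kernel_expansion[OF assms]
  have nonneg: "0 \<le> pochhammer (\<alpha> + 1) n / fact n * (ln (\<tau> / a) / L) ^ n" for n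
    using assms interval order L_pos
    by (intro mult_nonneg_nonneg divide_nonneg_nonneg less_imp_le[OF pochhammer_pos] zero_le_power) auto
  then show "0 \<le> (\<Sum>n<N. pochhammer (\<alpha> + 1) n / fact n * (ln (\<tau> / a) / L) ^ n)"
    by (intro sum_nonneg)
  show "(\<Sum>n<N. pochhammer (\<alpha> + 1) n / fact n * (ln (\<tau> / a) / L) ^ n)
      \<le> L powr (\<alpha> + 1) * ln (t / \<tau>) powr (- \<alpha> - 1)"
    using sum_le_suminf[OF sums_summable[OF series]] nonneg sums_unique[OF series] by simp
qed

lemma moment_series_sums:
  "(\<lambda>n. pochhammer (\<alpha> + 1) n / fact n * (moment n / L ^ n)) sums (L powr (\<alpha> + 1) * K)"
proof -
  define c where "c n = pochhammer (\<alpha> + 1) n / fact n" for n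
  define k where "k \<tau> = ln (t / \<tau>) powr (- \<alpha> - 1) * g \<tau> / \<tau>" for \<tau>
  define f where "f N \<tau> = (\<Sum>n<N. c n * (ln (\<tau> / a) / L) ^ n) * (g \<tau> / \<tau>)" for N \<tau>
  have f_has_integral: "(f N has_integral (\<Sum>n<N. c n * (moment n / L ^ n))) {a..t}" for N
    unfolding f_def sum_distrib_right by (intro has_integral_sum has_integral_moment_term) auto
  have dominated: "norm (f N \<tau>) \<le> L powr (\<alpha> + 1) * \<bar>k \<tau>\<bar>" if "\<tau> \<in> {a..t}" for N \<tau>
  proof (cases "\<tau> = t")
    case False
    then have \<tau>: "\<tau> \<in> {a..<t}" "0 < \<tau>" using that interval by auto
    note bounds = binomial_partial_sum_bounds[OF \<tau>(1), of N, folded c_def]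
    have "norm (f N \<tau>) = (\<Sum>n<N. c n * (ln (\<tau> / a) / L) ^ n) * (\<bar>g \<tau>\<bar> / \<tau>)"
      unfolding f_def using bounds(1) \<tau> by (simp add: abs_mult)
    also have "\<dots> \<le> L powr (\<alpha> + 1) * ln (t / \<tau>) powr (- \<alpha> - 1) * (\<bar>g \<tau>\<bar> / \<tau>)"
      by (rule mult_right_mono[OF bounds(2)]) (use \<tau> in simp)
    also have "\<dots> = L powr (\<alpha> + 1) * \<bar>k \<tau>\<bar>"
      using \<tau> by (simp add: k_def abs_mult)
    finally show ?thesis .
  qed (simp add: f_def g_at_t)
  have pointwise: "(\<lambda>N. f N \<tau>) \<longlonglongrightarrow> L powr (\<alpha> + 1) * k \<tau>" if "\<tau> \<in> {a..t}" for \<tau>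
  proof (cases "\<tau> = t")
    case False
    then have "\<tau> \<in> {a..<t}" using that by auto
    from binomial_kernel_expansion[OF this, folded c_def]
    have "(\<lambda>N. f N \<tau>) \<longlonglongrightarrow> L powr (\<alpha> + 1) * ln (t / \<tau>) powr (- \<alpha> - 1) * (g \<tau> / \<tau>)"
      unfolding f_def sums_def by (rule tendsto_mult_right)
    also have "L powr (\<alpha> + 1) * ln (t / \<tau>) powr (- \<alpha> - 1) * (g \<tau> / \<tau>) = L powr (\<alpha> + 1) * k \<tau>"
      unfolding k_def by (simp only: times_divide_eq_right mult.assoc)
    finally show ?thesis .
  qed (simp add: f_def k_def g_at_t)
  have "(\<lambda>\<tau>. L powr (\<alpha> + 1) * \<bar>k \<tau>\<bar>) integrable_on {a..t}"
    using K_integrand_absolutely_integrable unfolding k_def[symmetric]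
    by (intro integrable_on_mult_right) (simp add: absolutely_integrable_on_def)
  from dominated_convergence(2)[OF has_integral_integrable[OF f_has_integral] this dominated pointwise]
  show ?thesis
    unfolding sums_def c_def[symmetric] integral_unique[OF f_has_integral] K_def k_def[symmetric] by simp
qed

section \<open>The Hadamard derivative and the series\<close>

lemma hadamard_left_deriv_eq:
  assumes g: "\<And>\<tau>. g \<tau> = x \<tau> - x t"
  shows "hadamard_left_deriv \<alpha> a x t = (L powr (- \<alpha>) * x t - \<alpha> * K) / Gamma (1 - \<alpha>)"
proof -
  define F where "F s = x t * (ln (s / a) powr (1 - \<alpha>) / (1 - \<alpha>)) + G s" for s
  have F_eq: "F s = integral {a..s} (\<lambda>\<tau>. ln (s / \<tau>) powr (- \<alpha>) * x \<tau> / \<tau>)" if "s \<in> {a<..<b}" for s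
  proof -
    have "((\<lambda>\<tau>. x t * (ln (s / \<tau>) powr (- \<alpha>) / \<tau>) + integrand s \<tau>) has_integral F s) {a..s}"
      unfolding F_def G_def using that interval order
      by (intro has_integral_add has_integral_mult_right has_integral_ln_quotient_powr
          integrable_integral integrand_integrable) auto
    moreover have "x t * (ln (s / \<tau>) powr (- \<alpha>) / \<tau>) + integrand s \<tau> = ln (s / \<tau>) powr (- \<alpha>) * x \<tau> / \<tau>" for \<tau>
      by (simp add: integrand_def g algebra_simps diff_divide_distrib)
    ultimately show ?thesis by (simp add: integral_unique)
  qed
  have "((\<lambda>s. ln (s / a)) has_real_derivative 1 / t) (at t)"
    using interval by (auto intro!: derivative_eq_intros simp: field_simps)
  from DERIV_fun_powr[OF this, of "1 - \<alpha>"]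
  have "((\<lambda>s. ln (s / a) powr (1 - \<alpha>)) has_real_derivative (1 - \<alpha>) * (L powr (- \<alpha>) / t)) (at t)"
    using interval by (simp add: L_def)
  then have "(F has_real_derivative x t * ((1 - \<alpha>) * (L powr (- \<alpha>) / t) / (1 - \<alpha>)) + - \<alpha> * K / t) (at t)"
    unfolding F_def by (intro DERIV_add DERIV_cmult DERIV_cdivide G_has_derivative)
  then have "(F has_real_derivative x t * (L powr (- \<alpha>) / t) - \<alpha> * K / t) (at t)"
    using order by simp
  then have "((\<lambda>s. 1 / Gamma (1 - \<alpha>) * integral {a..s} (\<lambda>\<tau>. ln (s / \<tau>) powr (- \<alpha>) * x \<tau> / \<tau>))
      has_real_derivative 1 / Gamma (1 - \<alpha>) * (x t * (L powr (- \<alpha>) / t) - \<alpha> * K / t)) (at t)"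
  proof (rule has_field_derivative_transform_within_open[OF DERIV_cmult])
    show "open {a<..<b}" "t \<in> {a<..<b}" using interval by auto
  next
    fix s assume "s \<in> {a<..<b}"
    then show "1 / Gamma (1 - \<alpha>) * F s
        = 1 / Gamma (1 - \<alpha>) * integral {a..s} (\<lambda>\<tau>. ln (s / \<tau>) powr (- \<alpha>) * x \<tau> / \<tau>)"
      by (simp only: F_eq)
  qed
  moreover have "t * (c * (X * (P / t) - Y / t)) = (P * X - Y) * c" for c X P Y :: real
    using interval by (simp add: field_simps)
  ultimately show ?thesis
    unfolding hadamard_left_deriv_def by (simp add: DERIV_imp_deriv divide_inverse)
qed

lemma hadV_eq:
  assumes g: "\<And>\<tau>. g \<tau> = x \<tau> - x t"
  shows "hadV a x (n + 2) t = - ((real n + 1) * moment n + x t * L ^ (n + 1))"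
proof -
  have "((\<lambda>\<tau>. ln (\<tau> / a) ^ n * g \<tau> / \<tau> + x t * (ln (\<tau> / a) ^ n / \<tau>)) has_integral
      moment n + x t * (L ^ (n + 1) / (n + 1))) {a..t}"
    unfolding moment_def L_def using interval
    by (intro has_integral_add integrable_integral moment_integrand_integrable
        has_integral_mult_right has_integral_ln_power_div) auto
  moreover have "ln (\<tau> / a) ^ n * g \<tau> / \<tau> + x t * (ln (\<tau> / a) ^ n / \<tau>) = ln (\<tau> / a) ^ n * x \<tau> / \<tau>" for \<tau>
    by (simp add: g algebra_simps diff_divide_distrib)
  ultimately have "integral {a..t} (\<lambda>\<tau>. ln (\<tau> / a) ^ n * x \<tau> / \<tau>) = moment n + x t * (L ^ (n + 1) / (n + 1))"
    by (simp add: integral_unique)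
  then show ?thesis
    by (simp add: hadV_def field_simps)
qed

lemma hadamard_series_term_eq:
  assumes g: "\<And>\<tau>. g \<tau> = x \<tau> - x t"
  shows "(let p = n + 2 in
          hadC \<alpha> p * ln (t / a) powr (1 - \<alpha> - real p) * hadV a x p t
        - Gamma (real p + \<alpha> - 1) / (Gamma \<alpha> * Gamma (1 - \<alpha>) * fact (p - 1)) * ln (t / a) powr (- \<alpha>) * x t)
      = \<alpha> / Gamma (1 - \<alpha>) * L powr (- \<alpha> - 1) * (pochhammer (\<alpha> + 1) n / fact n * (moment n / L ^ n))"
proof -
  define c where "c = pochhammer \<alpha> (n + 1) / (Gamma (1 - \<alpha>) * fact (n + 1))"
  define P where "P = L powr (- \<alpha> - 1)"
  have "ln (t / a) powr (1 - \<alpha> - real (n + 2)) = L powr ((- \<alpha> - 1) - real n)"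
    unfolding L_def by (rule arg_cong[where f = "\<lambda>e. ln (t / a) powr e"]) simp
  also have "\<dots> = P / L ^ n"
    using L_pos by (simp add: P_def powr_diff powr_realpow)
  finally have power_p: "ln (t / a) powr (1 - \<alpha> - real (n + 2)) = P / L ^ n" .
  have "ln (t / a) powr (- \<alpha>) = L powr ((- \<alpha> - 1) + 1)"
    unfolding L_def by (rule arg_cong[where f = "\<lambda>e. ln (t / a) powr e"]) simp
  also have "\<dots> = P * L"
    unfolding P_def by (subst powr_add) (use L_pos in simp)
  finally have power_0: "ln (t / a) powr (- \<alpha>) = P * L" .
  have "(let p = n + 2 in
          hadC \<alpha> p * ln (t / a) powr (1 - \<alpha> - real p) * hadV a x p t
        - Gamma (real p + \<alpha> - 1) / (Gamma \<alpha> * Gamma (1 - \<alpha>) * fact (p - 1)) * ln (t / a) powr (- \<alpha>) * x t)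
      = (- c) * (P / L ^ n) * (- ((real n + 1) * moment n + x t * (L ^ n * L))) - c * (P * L) * x t"
    unfolding Let_def hadC_eq_pochhammer[OF order] Gamma_coefficient_eq_pochhammer[OF order]
      hadV_eq[OF g] power_p power_0 c_def[symmetric] power_add power_one_right ..
  also have "\<dots> = (c * (real n + 1)) * P * (moment n / L ^ n)"
    using L_pos by (simp add: field_simps)
  finally show ?thesis
    unfolding c_def pochhammer_Suc_coefficient[OF order] P_def by (simp only: mult_ac)
qed

lemma hadamard_series_sums:
  assumes g: "\<And>\<tau>. g \<tau> = x \<tau> - x t"
  shows "(\<lambda>n. let p = n + 2 in
          hadC \<alpha> p * ln (t / a) powr (1 - \<alpha> - real p) * hadV a x p t
        - Gamma (real p + \<alpha> - 1) / (Gamma \<alpha> * Gamma (1 - \<alpha>) * fact (p - 1)) * ln (t / a) powr (- \<alpha>) * x t)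
      sums (\<alpha> * K / Gamma (1 - \<alpha>))"
proof -
  have "L powr (- \<alpha> - 1) * L powr (\<alpha> + 1) = 1"
    using L_pos by (simp flip: powr_add)
  then have limit: "\<alpha> / Gamma (1 - \<alpha>) * L powr (- \<alpha> - 1) * (L powr (\<alpha> + 1) * K) = \<alpha> * K / Gamma (1 - \<alpha>)"
    by (metis (no_types, lifting) mult.assoc mult.commute mult.right_neutral times_divide_eq_left)
  show ?thesis
    unfolding hadamard_series_term_eq[OF g] limit[symmetric] by (rule sums_mult[OF moment_series_sums])
qed

end

theorem mainTheorem1:
  fixes \<alpha> a b t :: real and x :: "real \<Rightarrow> real"
  assumes "0 < \<alpha>" "\<alpha> < 1" "0 < a" "a < b"
    and "abs_continuous_on_interval a b x"
    and "t \<in> {a<..<b}"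
    and "x differentiable (at t)"
  shows "hadamard_left_deriv \<alpha> a x t =
      (1 / Gamma (1 - \<alpha>)) * (ln (t / a)) powr (- \<alpha>) * x t
    + hadB \<alpha> * (ln (t / a)) powr (1 - \<alpha>) * t * deriv x t
    - (\<Sum>n. let p = n + 2 in
          hadC \<alpha> p * (ln (t / a)) powr (1 - \<alpha> - real p) * hadV a x p t
        - Gamma (real p + \<alpha> - 1) / (Gamma \<alpha> * Gamma (1 - \<alpha>) * fact (p - 1))
            * (ln (t / a)) powr (- \<alpha>) * x t)"
proof -
  have continuous: "continuous_on {a..b} x"
    using assms(5) by (rule continuous_on_if_abs_continuous_on_interval)
  then obtain M where "\<forall>\<tau>\<in>{a..b}. \<bar>x \<tau> - x t\<bar> \<le> M * \<bar>ln \<tau> - ln t\<bar>"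
    using differentiable_imp_ln_lipschitz_at[OF assms(7)] assms(3,6) by fastforce
  then interpret hadamard_vanishing \<alpha> a b t M "\<lambda>\<tau>. x \<tau> - x t"
    using assms continuous by unfold_locales (auto intro!: continuous_intros)
  show ?thesis
    using hadamard_left_deriv_eq sums_unique[OF hadamard_series_sums] hadB_eq_0[OF assms(1,2)]
    by (simp add: L_def diff_divide_distrib)
qed

end
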